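(* Let $k\ge2$ and $T\in\mathcal{GT}_k(n)$ with labelling $s$, and suppose $\omega_k(T)\preceq\omega_{k-1}(T)$. Then $s((k-1)1^-)=0$.
   Context: Type $C$ setting: $C_n=\{1<\cdots<n<\overline n<\cdots<\overline1\}$; a column is a strictly increasing word; $N_z(u)$ counts letters $x\le z$ or $x\ge\overline z$; admissible columns are nonempty columns with $N_z(u)\le z$ for all $z$. For admissible columns $c=x_1\cdots x_k$, $d=y_1\cdots y_l$, $c\preceq d$ iff $k\ge l$, $x_i\le y_i$ for $i\le l$, and there are no $1\le a\le b\le n$ and $1\le p\le q<r\le s\le l$ with ($x_p=a,y_q=b,y_r=\overline b,y_s=\overline a$ or $x_p=a,x_q=b,x_r=\overline b,y_s=\overline a$) and $(s-r)+(q-p)\ge b-a$. $\mathrm{ACol}(C_n)$ is the set of admissible columns plus a symbol $\epsilon$, and $\preceq$ is extended by $c\preceq\epsilon$ for all $c$, $\epsilon\not\preceq c$ for $c\ne\epsilon$. Blocks: $\mathfrak{c}(m)=12\cdots m$; $\mathfrak{c}(a,b)=(a+1)\cdots(a+b)$; $\mathfrak{c}(\overline a,c)=\overline a\cdots\overline{a-c+1}$ (empty when $b=0$ resp. $c=0$). $C$-trees: vertices $i$ ($i\ge1$), $im$ (outer), $im^-$ (inner) for $i,m\ge1$; $i$ has level $i$, $im,im^-$ level $i+m$; strand $i$ ordered $i<i1<i1^-<i2<\cdots$. A labelling of rank $k$ is $s$ from vertices of level $\le k$ to $\mathbb N$; valuation $q(v)=s(i)+\sum_{im\le v}s(im)-\sum_{im^-\le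 v}s(im^-)$ for $v$ on strand $i$; $n$-labelling if $0\le q\le n$. $\rho(i)=\mathfrak{c}(s(i))$; $\rho(im)=\mathfrak{c}(q(v'),s(im))$ with $v'$ the predecessor of $im$ on its strand; $\rho(im^-)=\mathfrak{c}(\overline{q(im)},s(im^-))$. Level reading $\omega_t(T)=\rho(t)\rho((t-1)1)\cdots\rho(1(t-1))\rho(1(t-1)^-)\cdots\rho((t-1)1^-)$, or $\epsilon$ if empty. $\mathcal{GT}_k(n)$: $n$-labellings of rank $k$ with each $\omega_t$ ($t\le k$) equal to $\epsilon$ or an admissible column. *)

theory Defs
  imports Main
begin

text \<open>Pos i stands for the letter i, Neg i for the barred letter overline i.
  The order is 1 < ... < n < overline n < ... < overline 1.\<close>

datatype letter = Pos nat | Neg nat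

fun letter_le :: "letter \<Rightarrow> letter \<Rightarrow> bool" where
  "letter_le (Pos i) (Pos j) = (i \<le> j)"
| "letter_le (Pos i) (Neg j) = True"
| "letter_le (Neg i) (Pos j) = False"
| "letter_le (Neg i) (Neg j) = (j \<le> i)"

definition letter_less :: "letter \<Rightarrow> letter \<Rightarrow> bool" where
  "letter_less x y \<longleftrightarrow> letter_le x y \<and> x \<noteq> y"

fun in_Cn :: "nat \<Rightarrow> letter \<Rightarrow> bool" where
  "in_Cn n (Pos i) = (1 \<le> i \<and> i \<le> n)"
| "in_Cn n (Neg i) = (1 \<le> i \<and> i \<le> n)"

definition is_column :: "nat \<Rightarrow> letter list \<Rightarrow> bool" where
  "is_column n u \<longleftrightarrow> (\<forall>x\<in>set u. in_Cn n x) \<and> sorted_wrt letter_less u"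

definition Nz :: "nat \<Rightarrow> letter list \<Rightarrow> nat" where
  "Nz z u = length (filter (\<lambda>x. letter_le x (Pos z) \<or> letter_le (Neg z) x) u)"

definition admissible :: "nat \<Rightarrow> letter list \<Rightarrow> bool" where
  "admissible n u \<longleftrightarrow> u \<noteq> [] \<and> is_column n u \<and> (\<forall>z\<in>{1..n}. Nz z u \<le> z)"

text \<open>The relation c \<preceq> d on admissible columns (positions are 0-based here;
  the conditions only involve differences of positions and their order).\<close>
definition col_preceq :: "nat \<Rightarrow> letter list \<Rightarrow> letter list \<Rightarrow> bool" where
  "col_preceq n c d \<longleftrightarrow>
     length c \<ge> length d \<and>
     (\<forall>i<length d. letter_le (c ! i) (d ! i)) \<and>
     \<not> (\<exists>a b p q r t. 1 \<le> a \<and> a \<le> b \<and> b \<le> n \<and>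
            p \<le> q \<and> q < r \<and> r \<le> t \<and> t < length d \<and>
            ((c ! p = Pos a \<and> d ! q = Pos b \<and> d ! r = Neg b \<and> d ! t = Neg a) \<or>
             (c ! p = Pos a \<and> c ! q = Pos b \<and> c ! r = Neg b \<and> d ! t = Neg a)) \<and>
            (t - r) + (q - p) \<ge> b - a)"

text \<open>ACol(C_n): admissible columns plus the symbol epsilon, modelled as
  letter list option with None = epsilon.\<close>
fun acol_preceq :: "nat \<Rightarrow> letter list option \<Rightarrow> letter list option \<Rightarrow> bool" where
  "acol_preceq n c None = True"
| "acol_preceq n None (Some d) = False"
| "acol_preceq n (Some c) (Some d) = col_preceq n c d"

definition blk :: "nat \<Rightarrow> letter list" where
  "blk m = map Pos [1..<m+1]"

definition blk2 :: "nat \<Rightarrow> nat \<Rightarrow> letter list" where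
  "blk2 a b = map (\<lambda>j. Pos (a + j)) [1..<b+1]"

definition blkbar :: "nat \<Rightarrow> nat \<Rightarrow> letter list" where
  "blkbar a c = map (\<lambda>j. Neg (a - j)) [0..<c]"

text \<open>Root i = vertex i, Outer i m = vertex im, Inner i m = vertex im^-.\<close>
datatype vertex = Root nat | Outer nat nat | Inner nat nat

fun valid_vertex :: "vertex \<Rightarrow> bool" where
  "valid_vertex (Root i) = (1 \<le> i)"
| "valid_vertex (Outer i m) = (1 \<le> i \<and> 1 \<le> m)"
| "valid_vertex (Inner i m) = (1 \<le> i \<and> 1 \<le> m)"

fun level :: "vertex \<Rightarrow> nat" where
  "level (Root i) = i"
| "level (Outer i m) = i + m"
| "level (Inner i m) = i + m"

text \<open>A labelling is a function s : vertex \<Rightarrow> nat; only its values on valid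
  vertices of level \<le> k (the rank) are relevant.
  Valuation q(v) = s(i) + sum_{im \<le> v} s(im) - sum_{im^- \<le> v} s(im^-),
  for the strand order i < i1 < i1^- < i2 < i2^- < ...\<close>
fun val :: "(vertex \<Rightarrow> nat) \<Rightarrow> vertex \<Rightarrow> int" where
  "val s (Root i) = int (s (Root i))"
| "val s (Outer i m) = int (s (Root i)) + (\<Sum>j\<in>{1..m}. int (s (Outer i j)))
                         - (\<Sum>j\<in>{1..<m}. int (s (Inner i j)))"
| "val s (Inner i m) = int (s (Root i)) + (\<Sum>j\<in>{1..m}. int (s (Outer i j)))
                         - (\<Sum>j\<in>{1..m}. int (s (Inner i j)))"

definition n_labelling :: "nat \<Rightarrow> nat \<Rightarrow> (vertex \<Rightarrow> nat) \<Rightarrow> bool" where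
  "n_labelling n k s \<longleftrightarrow>
     (\<forall>v. valid_vertex v \<and> level v \<le> k \<longrightarrow> 0 \<le> val s v \<and> val s v \<le> int n)"

definition pred_outer :: "nat \<Rightarrow> nat \<Rightarrow> vertex" where
  "pred_outer i m = (if m = 1 then Root i else Inner i (m - 1))"

fun rho :: "(vertex \<Rightarrow> nat) \<Rightarrow> vertex \<Rightarrow> letter list" where
  "rho s (Root i) = blk (s (Root i))"
| "rho s (Outer i m) = blk2 (nat (val s (pred_outer i m))) (s (Outer i m))"
| "rho s (Inner i m) = blkbar (nat (val s (Outer i m))) (s (Inner i m))"

definition level_word :: "(vertex \<Rightarrow> nat) \<Rightarrow> nat \<Rightarrow> letter list" where
  "level_word s t =
     rho s (Root t)
     @ concat (map (\<lambda>i. rho s (Outer i (t - i))) (rev [1..<t]))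
     @ concat (map (\<lambda>i. rho s (Inner i (t - i))) [1..<t])"

definition omega :: "(vertex \<Rightarrow> nat) \<Rightarrow> nat \<Rightarrow> letter list option" where
  "omega s t = (if level_word s t = [] then None else Some (level_word s t))"

definition GT :: "nat \<Rightarrow> nat \<Rightarrow> (vertex \<Rightarrow> nat) set" where
  "GT k n = {s. n_labelling n k s \<and>
                (\<forall>t\<in>{1..k}. omega s t = None \<or>
                    (\<exists>w. omega s t = Some w \<and> admissible n w))}"

end

theory Submission
  imports Defs
begin

text \<open>Suppose \<open>j = s((k-1)1\<^sup>-) > 0\<close> and let \<open>q = s(k-1) + s((k-1)1)\<close>, the valuation of
  \<open>(k-1)1\<close>; the labelling conditions give \<open>1 \<le> j \<le> q \<le> n\<close>. The column \<open>\<omega>\<^sub>k\<close> contains the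
  block \<open>\<rho>((k-1)1)\<close>, i.e. the letters \<open>s(k-1)+1, \<dots>, q\<close>, and the block \<open>\<rho>((k-1)1\<^sup>-)\<close>,
  which begins with the barred letter \<open>q\<close>. As \<open>\<omega>\<^bsub>k-1\<^esub>\<close> begins with \<open>\<rho>(k-1) = 1 \<cdots> s(k-1)\<close>, the
  letterwise comparison in \<open>\<omega>\<^sub>k \<preceq> \<omega>\<^bsub>k-1\<^esub>\<close> forces the column \<open>\<omega>\<^sub>k\<close> to begin with
  \<open>1 \<cdots> s(k-1)\<close> as well. So \<open>\<omega>\<^sub>k\<close> contains the \<open>q + 1\<close> letters \<open>1, \<dots>, q\<close> and barred \<open>q\<close>,
  i.e. \<open>N\<^sub>q(\<omega>\<^sub>k) > q\<close>, contradicting admissibility.\<close>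

lemma sorted_letter_less_distinct: "sorted_wrt letter_less c \<Longrightarrow> distinct c"
  by (induction c) (auto simp: letter_less_def)

lemma column_dominated_by_blk:
  assumes col: "is_column n c" and len: "r \<le> length c"
    and dominated: "\<forall>i<r. letter_le (c ! i) (Pos (Suc i))"
    and "i < r"
  shows "c ! i = Pos (Suc i)"
  using \<open>i < r\<close>
proof (induction i)
  case 0
  then have "c ! 0 \<in> set c"
    using len by (intro nth_mem) linarith
  then have "in_Cn n (c ! 0)"
    using col by (simp add: is_column_def)
  with dominated 0 show ?case
    by (cases "c ! 0") auto
next
  case (Suc i)
  then have prev: "c ! i = Pos (Suc i)" by simp
  have "letter_less (c ! i) (c ! Suc i)"
    using col Suc.prems len by (auto simp: is_column_def intro: sorted_wrt_nth_less)
  with prev dominated Suc.prems show ?case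
    by (cases "c ! Suc i") (auto simp: letter_less_def)
qed

lemma length_blk: "length (blk r) = r"
  by (simp add: blk_def)

lemma col_preceq_blk_prefix:
  assumes "col_preceq n c d" and "is_column n c" and "take r d = blk r"
  shows "Pos ` {1..r} \<subseteq> set c"
proof -
  have len_d: "r \<le> length d"
    using arg_cong[OF \<open>take r d = blk r\<close>, of length] by (simp add: length_blk)
  with assms(1) have len_c: "r \<le> length c"
    by (simp add: col_preceq_def)
  have dominated: "\<forall>i<r. letter_le (c ! i) (Pos (Suc i))"
  proof (intro allI impI)
    fix i assume "i < r"
    have "letter_le (c ! i) (d ! i)"
      using assms(1) len_d \<open>i < r\<close> by (simp add: col_preceq_def)
    moreover have "d ! i = Pos (Suc i)"
      using \<open>i < r\<close> arg_cong[OF \<open>take r d = blk r\<close>, of "\<lambda>w. w ! i"]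
      by (simp add: blk_def del: upt_Suc)
    ultimately show "letter_le (c ! i) (Pos (Suc i))" by simp
  qed
  have "Pos i \<in> set c" if "i \<in> {1..r}" for i
  proof -
    have "i - 1 < r"
      using that by auto
    with column_dominated_by_blk[OF assms(2) len_c dominated] have "c ! (i - 1) = Pos i"
      using that by fastforce
    moreover have "i - 1 < length c"
      using \<open>i - 1 < r\<close> len_c by simp
    ultimately show ?thesis
      by (metis nth_mem)
  qed
  then show ?thesis by blast
qed

lemma card_le_Nz:
  assumes "is_column n c" and "S \<subseteq> set c"
    and "\<forall>x\<in>S. letter_le x (Pos z) \<or> letter_le (Neg z) x"
  shows "card S \<le> Nz z c"
proof -
  let ?P = "\<lambda>x. letter_le x (Pos z) \<or> letter_le (Neg z) x"
  have "distinct c"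
    using assms(1) sorted_letter_less_distinct by (simp add: is_column_def)
  then have "Nz z c = card (set (filter ?P c))"
    unfolding Nz_def using distinct_card[OF distinct_filter] by metis
  moreover have "S \<subseteq> set (filter ?P c)"
    using assms(2,3) by auto
  ultimately show ?thesis
    by (simp add: card_mono)
qed

lemma admissible_not_full:
  assumes "admissible n c" and "1 \<le> q" and "q \<le> n"
    and "Pos ` {1..q} \<subseteq> set c"
  shows "Neg q \<notin> set c"
proof
  assume "Neg q \<in> set c"
  let ?S = "insert (Neg q) (Pos ` {1..q})"
  have "card ?S \<le> Nz q c"
    using assms(1,4) \<open>Neg q \<in> set c\<close>
    by (intro card_le_Nz[of n]) (auto simp: admissible_def)
  moreover have "card ?S = q + 1"
    by (subst card_insert_disjoint) (auto simp: card_image inj_on_def)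
  moreover have "Nz q c \<le> q"
    using assms(1-3) by (simp add: admissible_def)
  ultimately show False by simp
qed

lemma set_blk2: "set (blk2 a b) = Pos ` {a<..a + b}"
proof -
  have "set (blk2 a b) = Pos ` ((+) a ` {1..<b + 1})"
    unfolding blk2_def set_map set_upt image_image by simp
  also have "(+) a ` {1..<b + 1} = {a<..a + b}"
    by (auto simp: image_iff intro!: bexI[where x = "_ - a"])
  finally show ?thesis .
qed

lemma Neg_in_blkbar: "0 < c \<Longrightarrow> Neg a \<in> set (blkbar a c)"
  by (force simp: blkbar_def)

lemma level_word_take_Root: "take (s (Root t)) (level_word s t) = blk (s (Root t))"
  by (simp add: level_word_def blk_def)

lemma omega_nonempty: "level_word s t \<noteq> [] \<Longrightarrow> omega s t = Some (level_word s t)"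
  by (simp add: omega_def)

lemma acol_preceq_omega_Root:
  assumes "acol_preceq n (Some c) (omega s t)" and "is_column n c"
  shows "Pos ` {1..s (Root t)} \<subseteq> set c"
proof (cases "level_word s t = []")
  case True
  then have "s (Root t) = 0"
    using level_word_take_Root[of s t] length_blk[of "s (Root t)"] by simp
  then show ?thesis by simp
next
  case False
  with assms have "col_preceq n c (level_word s t)"
    by (simp add: omega_nonempty)
  then show ?thesis
    using assms(2) level_word_take_Root by (rule col_preceq_blk_prefix)
qed

lemma Pos_rho_Outer_in_level_word:
  assumes "i \<in> {1..<t}"
  shows "Pos ` {nat (val s (pred_outer i (t - i)))<..
                 nat (val s (pred_outer i (t - i))) + s (Outer i (t - i))}
           \<subseteq> set (level_word s t)"
proof -
  have "set (rho s (Outer i (t - i))) \<subseteq> set (level_word s t)"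
    using assms by (auto simp: level_word_def)
  then show ?thesis
    by (simp add: set_blk2)
qed

lemma Neg_rho_Inner_in_level_word:
  assumes "i \<in> {1..<t}" and "0 < s (Inner i (t - i))"
  shows "Neg (nat (val s (Outer i (t - i)))) \<in> set (level_word s t)"
proof -
  have "set (rho s (Inner i (t - i))) \<subseteq> set (level_word s t)"
    using assms(1) by (auto simp: level_word_def)
  moreover have "Neg (nat (val s (Outer i (t - i)))) \<in> set (rho s (Inner i (t - i)))"
    using assms(2) by (simp add: Neg_in_blkbar)
  ultimately show ?thesis
    by blast
qed

lemma GT_val_bounds:
  "s \<in> GT k n \<Longrightarrow> valid_vertex v \<Longrightarrow> level v \<le> k \<Longrightarrow> 0 \<le> val s v \<and> val s v \<le> int n"
  by (simp add: GT_def n_labelling_def)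

lemma GT_strand_bounds:
  assumes "s \<in> GT k n" and "1 \<le> i" and "i < k"
  shows "s (Inner i 1) \<le> s (Root i) + s (Outer i 1)" and "s (Root i) + s (Outer i 1) \<le> n"
  using GT_val_bounds[OF assms(1), of "Inner i 1"] GT_val_bounds[OF assms(1), of "Outer i 1"] assms(2,3)
  by auto

lemma GT_admissible_level_word:
  assumes "s \<in> GT k n" and "t \<in> {1..k}" and "level_word s t \<noteq> []"
  shows "admissible n (level_word s t)"
proof -
  have "omega s t = None \<or> (\<exists>w. omega s t = Some w \<and> admissible n w)"
    using assms(1,2) by (simp add: GT_def)
  with assms(3) show ?thesis
    by (simp add: omega_nonempty)
qed

theorem proposition6p2:
  fixes k n :: nat and s :: "vertex \<Rightarrow> nat"
  assumes "k \<ge> 2"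
    and "s \<in> GT k n"
    and "acol_preceq n (omega s k) (omega s (k - 1))"
  shows "s (Inner (k - 1) 1) = 0"
proof (rule ccontr)
  assume "s (Inner (k - 1) 1) \<noteq> 0"
  define i where "i = k - 1"
  define r where "r = s (Root i)"
  define q where "q = r + s (Outer i 1)"
  define c where "c = level_word s k"
  have i: "1 \<le> i" "k = Suc i"
    using assms(1) by (auto simp: i_def)
  have q_bounds: "1 \<le> q" "q \<le> n"
    using GT_strand_bounds[OF assms(2) i(1)] \<open>s (Inner (k - 1) 1) \<noteq> 0\<close>
    by (auto simp: i q_def r_def)
  have neg: "Neg q \<in> set c"
    using Neg_rho_Inner_in_level_word[of i k s] i \<open>s (Inner (k - 1) 1) \<noteq> 0\<close>
    by (simp add: i c_def q_def r_def flip: of_nat_add)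
  then have "c \<noteq> []"
    by auto
  then have "omega s k = Some c" and adm: "admissible n c"
    using GT_admissible_level_word[OF assms(2), of k] i by (simp_all add: c_def omega_nonempty)
  have "Pos ` {1..r} \<subseteq> set c"
    using acol_preceq_omega_Root assms(3) \<open>omega s k = Some c\<close> adm
    by (auto simp: admissible_def i r_def)
  moreover have "Pos ` {r<..q} \<subseteq> set c"
    using Pos_rho_Outer_in_level_word[of i k s] i
    by (simp add: c_def q_def r_def pred_outer_def)
  moreover have "{1..q} = {1..r} \<union> {r<..q}"
    by (auto simp: q_def)
  ultimately have "Pos ` {1..q} \<subseteq> set c"
    by (simp add: image_Un)
  with admissible_not_full[OF adm q_bounds] neg show False
    by blast
qed

end
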